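(* Let $P_0,P_1,Q_2\in\mathbb H$ be pairwise distinct with $\langle P_0,P_1\rangle=\langle P_0,Q_2\rangle=\langle P_1,Q_2\rangle$ (i.e. $P_0P_1Q_2$ is equilateral). Then there is $\varepsilon_2\in\{-1,1\}$ such that $$Q_2=\frac{-\langle P_0,P_1\rangle(P_0+P_1)+\varepsilon_2\sqrt{1-2\langle P_0,P_1\rangle}\,P_0\tilde\times P_1}{1-\langle P_0,P_1\rangle}.$$
   Context: $\langle v,w\rangle=-v_1w_1+v_2w_2+v_3w_3$ on $\mathbb R^3$; $\mathbb H=\{P\in\mathbb R^3:\langle P,P\rangle=-1,\ P_1\ge1\}$; $v\tilde\times w:=J(v\times w)$ with $J=\mathrm{diag}(-1,1,1)$ and $\times$ the Euclidean cross product. *)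

theory Defs
  imports "HOL-Analysis.Analysis"
begin

definition lor :: "real^3 \<Rightarrow> real^3 \<Rightarrow> real" where
  "lor v w = - (v$1 * w$1) + v$2 * w$2 + v$3 * w$3"

definition hyp :: "(real^3) set" where
  "hyp = {P. lor P P = -1 \<and> P$1 \<ge> 1}"

definition Jmap :: "real^3 \<Rightarrow> real^3" where
  "Jmap v = (\<chi> i. if i = 1 then - (v$i) else v$i)"

definition lcross :: "real^3 \<Rightarrow> real^3 \<Rightarrow> real^3" where
  "lcross v w = Jmap (cross3 v w)"

end

theory Submission
  imports Defs
begin

text \<open>
  Write \<open>a = \<langle>P\<^sub>0,P\<^sub>1\<rangle>\<close>; distinct points of \<open>\<bbbH>\<close> satisfy \<open>a < -1\<close>.
  Equidistance gives \<open>\<langle>(1 - a) Q\<^sub>2 + a (P\<^sub>0 + P\<^sub>1), P\<^sub>i\<rangle> = 0\<close> for \<open>i = 0, 1\<close>, and the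
  Lorentz-orthogonal complement of \<open>P\<^sub>0, P\<^sub>1\<close> is the line spanned by \<open>P\<^sub>0 \<tilde>\<times> P\<^sub>1\<close>,
  a spacelike vector with \<open>\<langle>P\<^sub>0 \<tilde>\<times> P\<^sub>1, P\<^sub>0 \<tilde>\<times> P\<^sub>1\<rangle> = a\<^sup>2 - 1 > 0\<close>.  Hence
  \<open>(1 - a) Q\<^sub>2 = -a (P\<^sub>0 + P\<^sub>1) + s P\<^sub>0 \<tilde>\<times> P\<^sub>1\<close>, and \<open>\<langle>Q\<^sub>2,Q\<^sub>2\<rangle> = -1\<close> forces \<open>s\<^sup>2 = 1 - 2a\<close>.
\<close>

lemma lor_commute: "lor v w = lor w v"
  by (simp add: lor_def algebra_simps)

lemma lor_add_left: "lor (u + v) w = lor u w + lor v w"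
  and lor_add_right: "lor w (u + v) = lor w u + lor w v"
  by (simp_all add: lor_def algebra_simps)

lemma lor_scaleR_left: "lor (c *\<^sub>R v) w = c * lor v w"
  and lor_scaleR_right: "lor v (c *\<^sub>R w) = c * lor v w"
  by (simp_all add: lor_def algebra_simps)

lemma lor_eq_inner_Jmap: "lor v w = Jmap v \<bullet> w"
  by (simp add: lor_def Jmap_def inner_vec_def sum_3)

lemma Jmap_Jmap [simp]: "Jmap (Jmap v) = v"
  by (simp add: Jmap_def vec_eq_iff)

lemma Jmap_scaleR: "Jmap (c *\<^sub>R v) = c *\<^sub>R Jmap v"
  by (simp add: Jmap_def vec_eq_iff)

lemma lor_lcross_left: "lor (lcross v w) v = 0" "lor (lcross v w) w = 0"
  by (simp_all add: lor_eq_inner_Jmap lcross_def dot_cross_self)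

lemma lor_lcross_lcross: "lor (lcross v w) (lcross v w) = (lor v w)\<^sup>2 - lor v v * lor w w"
  by (simp add: lor_def lcross_def Jmap_def cross_components power2_eq_square algebra_simps)

lemma lor_orthogonal_imp_lcross_multiple:
  assumes "lor u v = 0" "lor u w = 0" and "lcross v w \<noteq> 0"
  obtains t where "u = t *\<^sub>R lcross v w"
proof
  define n where "n = cross3 v w"
  have "n \<noteq> 0"
    using assms(3) unfolding lcross_def n_def by (metis Jmap_scaleR scale_zero_left)
  \<comment> \<open>\<open>J u\<close> is Euclidean-orthogonal to \<open>v\<close> and \<open>w\<close>, so \<open>J u \<times> n = 0\<close>; expand \<open>n \<times> (J u \<times> n)\<close>.\<close>
  have "cross3 (Jmap u) n = 0"
    using assms(1,2) by (simp add: n_def Lagrange lor_eq_inner_Jmap)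
  then have parallel: "(n \<bullet> n) *\<^sub>R Jmap u = (n \<bullet> Jmap u) *\<^sub>R n"
    using Lagrange[of n "Jmap u" n] by simp
  have "Jmap u = (1 / (n \<bullet> n)) *\<^sub>R ((n \<bullet> n) *\<^sub>R Jmap u)"
    using \<open>n \<noteq> 0\<close> by simp
  also have "\<dots> = ((n \<bullet> Jmap u) / (n \<bullet> n)) *\<^sub>R n"
    by (simp add: parallel)
  finally show "u = ((n \<bullet> Jmap u) / (n \<bullet> n)) *\<^sub>R lcross v w"
    by (metis Jmap_Jmap Jmap_scaleR lcross_def n_def)
qed

lemma hyp_lor_less:
  assumes "P \<in> hyp" "Q \<in> hyp" "P \<noteq> Q"
  shows "lor P Q < -1"
proof (rule ccontr)
  assume "\<not> lor P Q < -1"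
  have norms: "-(P$1)\<^sup>2 + (P$2)\<^sup>2 + (P$3)\<^sup>2 = -1" "-(Q$1)\<^sup>2 + (Q$2)\<^sup>2 + (Q$3)\<^sup>2 = -1"
    using assms(1,2) by (auto simp: hyp_def lor_def power2_eq_square)
  \<comment> \<open>reverse Cauchy-Schwarz: Lagrange's identity rewritten with the hyperboloid equations\<close>
  have lagrange: "(P$1 * Q$1)\<^sup>2 = (1 + P$2 * Q$2 + P$3 * Q$3)\<^sup>2
      + ((P$2 - Q$2)\<^sup>2 + (P$3 - Q$3)\<^sup>2 + (P$2 * Q$3 - P$3 * Q$2)\<^sup>2)"
    using norms by algebra
  have "P$1 * Q$1 \<ge> 1"
    using assms(1,2) mult_mono[of 1 "P$1" 1 "Q$1"] by (simp add: hyp_def)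
  moreover have "P$1 * Q$1 \<le> 1 + P$2 * Q$2 + P$3 * Q$3"
    using \<open>\<not> lor P Q < -1\<close> by (simp add: lor_def)
  ultimately have "(P$1 * Q$1)\<^sup>2 \<le> (1 + P$2 * Q$2 + P$3 * Q$3)\<^sup>2"
    by (intro power_mono) auto
  with lagrange have "P$2 = Q$2" "P$3 = Q$3"
    by (smt (verit) zero_le_power2 zero_eq_power2)+
  with norms have "(P$1)\<^sup>2 = (Q$1)\<^sup>2"
    by simp
  with assms(1,2) have "P$1 = Q$1"
    by (simp add: hyp_def)
  with \<open>P$2 = Q$2\<close> \<open>P$3 = Q$3\<close> assms(3) show False
    by (simp add: vec_eq_iff forall_3)
qed

lemma equidistant_point_decomposition:
  assumes "lor P0 P0 = -1" "lor P1 P1 = -1" "lor P0 P1 = a" "a < -1"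
    and "lor Q P0 = a" "lor Q P1 = a"
  obtains s where "Q = (1 / (1 - a)) *\<^sub>R ((- a) *\<^sub>R (P0 + P1) + s *\<^sub>R lcross P0 P1)"
proof -
  define R where "R = (1 - a) *\<^sub>R Q + a *\<^sub>R (P0 + P1)"
  have "lor R P0 = 0" "lor R P1 = 0"
    unfolding R_def lor_add_left lor_scaleR_left
    using assms by (simp_all add: lor_commute[of P1 P0] algebra_simps)
  moreover have "lcross P0 P1 \<noteq> 0"
  proof
    assume "lcross P0 P1 = 0"
    then have "a\<^sup>2 - 1 = 0"
      using lor_lcross_lcross[of P0 P1] assms(1-3) by (simp add: lor_def)
    moreover have "1 < (- a)\<^sup>2"
      using one_less_power[of "- a" 2] \<open>a < -1\<close> by simp
    ultimately show False
      by simp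
  qed
  ultimately obtain s where "R = s *\<^sub>R lcross P0 P1"
    using lor_orthogonal_imp_lcross_multiple by blast
  moreover have "Q = (1 / (1 - a)) *\<^sub>R ((- a) *\<^sub>R (P0 + P1) + R)"
    using \<open>a < -1\<close> by (simp add: R_def)
  ultimately have "Q = (1 / (1 - a)) *\<^sub>R ((- a) *\<^sub>R (P0 + P1) + s *\<^sub>R lcross P0 P1)"
    by simp
  then show thesis
    by (rule that)
qed

lemma equidistant_point_coefficient:
  assumes "lor P0 P0 = -1" "lor P1 P1 = -1" "lor P0 P1 = a" "a < -1"
    and "Q = (1 / (1 - a)) *\<^sub>R ((- a) *\<^sub>R (P0 + P1) + s *\<^sub>R lcross P0 P1)"
    and "lor Q Q = -1"
  shows "s\<^sup>2 = 1 - 2 * a"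
proof -
  define W where "W = P0 + P1"
  define N where "N = lcross P0 P1"
  define V where "V = (- a) *\<^sub>R W + s *\<^sub>R N"
  have "lor W W = 2 * a - 2"
    using assms(1-3) by (simp add: W_def lor_add_left lor_add_right lor_commute[of P1 P0])
  moreover have "lor W N = 0" "lor N W = 0" "lor N N = a\<^sup>2 - 1"
    using assms(1-3) lor_lcross_left[of P0 P1] lor_lcross_lcross[of P0 P1]
    by (simp_all add: W_def N_def lor_add_left lor_add_right
        lor_commute[of P0 "lcross P0 P1"] lor_commute[of P1 "lcross P0 P1"])
  ultimately have "lor V V = a\<^sup>2 * (2 * a - 2) + s\<^sup>2 * (a\<^sup>2 - 1)"
    unfolding V_def lor_add_left lor_add_right lor_scaleR_left lor_scaleR_right
    by (simp add: power2_eq_square)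
  moreover have "lor Q Q * (1 - a)\<^sup>2 = lor V V"
    using assms(4) by (simp add: assms(5) V_def W_def N_def lor_scaleR_left lor_scaleR_right power2_eq_square)
  ultimately have "- (1 - a)\<^sup>2 = a\<^sup>2 * (2 * a - 2) + s\<^sup>2 * (a\<^sup>2 - 1)"
    using assms(6) by simp
  then have "(a + 1) * (a - 1) * (s\<^sup>2 - (1 - 2 * a)) = 0"
    by algebra
  with assms(4) show ?thesis
    by simp
qed

theorem corollary2p3:
  fixes P0 P1 Q2 :: "real^3"
  assumes "P0 \<in> hyp" "P1 \<in> hyp" "Q2 \<in> hyp"
    and "P0 \<noteq> P1" "P0 \<noteq> Q2" "P1 \<noteq> Q2"
    and "lor P0 P1 = lor P0 Q2" "lor P0 Q2 = lor P1 Q2"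
  shows "\<exists>\<epsilon>2 :: real. \<epsilon>2 \<in> {-1, 1} \<and>
    Q2 = (1 / (1 - lor P0 P1)) *\<^sub>R
      ((- lor P0 P1) *\<^sub>R (P0 + P1)
       + (\<epsilon>2 * sqrt (1 - 2 * lor P0 P1)) *\<^sub>R lcross P0 P1)"
proof -
  define a where "a = lor P0 P1"
  have norms: "lor P0 P0 = -1" "lor P1 P1 = -1" "lor Q2 Q2 = -1"
    using assms(1-3) by (simp_all add: hyp_def)
  have "a < -1"
    using hyp_lor_less assms(1,2,4) a_def by blast
  moreover have "lor Q2 P0 = a" "lor Q2 P1 = a"
    using assms(7,8) a_def lor_commute by metis+
  ultimately obtain s where Q2: "Q2 = (1 / (1 - a)) *\<^sub>R ((- a) *\<^sub>R (P0 + P1) + s *\<^sub>R lcross P0 P1)"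
    using equidistant_point_decomposition norms a_def by metis
  then have "s\<^sup>2 = (sqrt (1 - 2 * a))\<^sup>2"
    using equidistant_point_coefficient norms a_def \<open>a < -1\<close> by simp
  then have "s = sqrt (1 - 2 * a) \<or> s = -1 * sqrt (1 - 2 * a)"
    by (simp add: power2_eq_iff)
  with Q2 show ?thesis
    unfolding a_def by (metis insertCI mult_1)
qed

end
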